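(* Let $(K_n,\Sigma)$ be a signed complete graph with $n\geq4$. For a sign $\Gamma\subseteq E(K_n)$, let $X(\Gamma)$ be the set of edges $vw$ of $K_n$ such that the triangle $uvw$ is even in $(K_n,\Gamma)$ for every $u\in V(K_n)\setminus\{v,w\}$, and let $Y(\Gamma)$ be the set of edges $vw$ of $K_n$ such that for every $u\in V(K_n)\setminus\{v,w\}$, $uvw$ is odd in $(K_n,\Gamma)$ and the number of odd triangles of $(K_n,\Gamma)$ containing $u$ and $v$ is one more than the number of even triangles of $(K_n,\Gamma)$ containing $u$ and $v$. If $Y(\Sigma)\neq\emptyset$, then $X(\Sigma)\cup Y(\Sigma)=X(\Sigma\triangle Y(\Sigma))$ and $Y(\Sigma\triangle Y(\Sigma))=\emptyset$.
   Context: A signed graph is a pair $(G,\Sigma)$ with $G$ a finite simple graph and $\Sigma\subseteq E(G)$ (the odd edges). A triangle $uvw$ is odd (resp. even) in $(G,\Sigma)$ if $|\Sigma\cap\{uv,uw,vw\}|$ is odd (resp. even). $\triangle$ denotes symmetric difference. *)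

theory Defs
  imports Main
begin

text \<open>Complete graph K_V on a finite vertex set V; edges are 2-element sets.
  A sign is a set of edges (the odd edges).\<close>

definition Kedges :: "'a set \<Rightarrow> 'a set set" where
  "Kedges V = {e. \<exists>v w. v \<in> V \<and> w \<in> V \<and> v \<noteq> w \<and> e = {v, w}}"

definition symdiff :: "'b set \<Rightarrow> 'b set \<Rightarrow> 'b set" (infixl "\<triangle>" 65) where
  "A \<triangle> B = (A - B) \<union> (B - A)"

definition odd_tri :: "'a set set \<Rightarrow> 'a \<Rightarrow> 'a \<Rightarrow> 'a \<Rightarrow> bool" where
  "odd_tri \<Gamma> u v w \<longleftrightarrow> odd (card (\<Gamma> \<inter> {{u, v}, {u, w}, {v, w}}))"

definition even_tri :: "'a set set \<Rightarrow> 'a \<Rightarrow> 'a \<Rightarrow> 'a \<Rightarrow> bool" where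
  "even_tri \<Gamma> u v w \<longleftrightarrow> even (card (\<Gamma> \<inter> {{u, v}, {u, w}, {v, w}}))"

definition n_odd :: "'a set \<Rightarrow> 'a set set \<Rightarrow> 'a \<Rightarrow> 'a \<Rightarrow> nat" where
  "n_odd V \<Gamma> u v = card {x \<in> V - {u, v}. odd_tri \<Gamma> u v x}"

definition n_even :: "'a set \<Rightarrow> 'a set set \<Rightarrow> 'a \<Rightarrow> 'a \<Rightarrow> nat" where
  "n_even V \<Gamma> u v = card {x \<in> V - {u, v}. even_tri \<Gamma> u v x}"

definition Xset :: "'a set \<Rightarrow> 'a set set \<Rightarrow> 'a set set" where
  "Xset V \<Gamma> = {e \<in> Kedges V. \<exists>v w. e = {v, w} \<and> v \<noteq> w \<and>
      (\<forall>u \<in> V - {v, w}. even_tri \<Gamma> u v w)}"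

definition Yset :: "'a set \<Rightarrow> 'a set set \<Rightarrow> 'a set set" where
  "Yset V \<Gamma> = {e \<in> Kedges V. \<exists>v w. e = {v, w} \<and> v \<noteq> w \<and>
      (\<forall>u \<in> V - {v, w}. odd_tri \<Gamma> u v w \<and> n_odd V \<Gamma> u v = n_even V \<Gamma> u v + 1)}"

end

theory Submission
  imports Defs
begin

text \<open>The four triangles on any four vertices use every edge twice, so their parities sum to
  zero. Consequently Y(\<Sigma>) is a matching: if ab and ac were both in Y(\<Sigma>), every triangle
  on bc would be odd, and the balance condition would give n - 2 = (n - 1) / 2. Hence a triangle
  contains at most one edge of Y(\<Sigma>), and flipping Y(\<Sigma>) changes exactly the parities of the
  triangles through a Y-edge; so X- and Y-edges of \<Sigma> become X-edges. Conversely, for an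
  X-edge ab of the flipped signing outside Y(\<Sigma>), the odd triangles of \<Sigma> on ab are those
  through the Y-partners of a and b; the balance condition at these partners forces n = 3 or
  n = 5, and the latter is refuted by counting at a fifth vertex. Finally, a Y-edge vw of the
  flipped signing meets no edge of Y(\<Sigma>), and for any ab \<in> Y(\<Sigma>) the flip lowers n_odd(a, v) by
  exactly one, although it equals (n - 1) / 2 before and after.\<close>

lemma symdiff_iff [simp]: "x \<in> A \<triangle> B \<longleftrightarrow> (x \<in> A) \<noteq> (x \<in> B)"
  unfolding symdiff_def by auto

lemma Kedges_iff: "{v, w} \<in> Kedges V \<longleftrightarrow> v \<in> V \<and> w \<in> V \<and> v \<noteq> w"
  unfolding Kedges_def by (auto simp: doubleton_eq_iff)

lemma odd_tri_iff:
  assumes "u \<noteq> v" "u \<noteq> w" "v \<noteq> w"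
  shows "odd_tri G u v w \<longleftrightarrow> ({u, v} \<in> G) \<noteq> (({u, w} \<in> G) \<noteq> ({v, w} \<in> G))"
proof -
  have "{u, v} \<noteq> {u, w}" "{u, v} \<noteq> {v, w}" "{u, w} \<noteq> {v, w}"
    using assms by (auto simp: doubleton_eq_iff)
  then show ?thesis
    unfolding odd_tri_def
    by (cases "{u, v} \<in> G"; cases "{u, w} \<in> G"; cases "{v, w} \<in> G") (auto simp: Int_insert_left)
qed

lemma odd_tri_commute12: "odd_tri G v u w = odd_tri G u v w"
  unfolding odd_tri_def by (simp add: insert_commute)

lemma odd_tri_commute23: "odd_tri G u w v = odd_tri G u v w"
  unfolding odd_tri_def by (simp add: insert_commute)

lemmas odd_tri_commute = odd_tri_commute12 odd_tri_commute23

lemma even_tri_iff_not_odd: "even_tri G u v w \<longleftrightarrow> \<not> odd_tri G u v w"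
  unfolding odd_tri_def even_tri_def by simp


lemma odd_tri_cocycle:
  assumes "distinct [a, b, c, d]"
  shows "odd_tri G a b c \<longleftrightarrow> (odd_tri G a b d \<longleftrightarrow> (odd_tri G a c d \<longleftrightarrow> odd_tri G b c d))"
  using assms by (simp add: odd_tri_iff insert_commute) argo

lemma n_odd_commute: "n_odd V G v u = n_odd V G u v"
  unfolding n_odd_def by (simp add: odd_tri_commute insert_commute)

lemma n_odd_add_n_even:
  assumes "finite V" "u \<in> V" "v \<in> V" "u \<noteq> v"
  shows "n_odd V G u v + n_even V G u v + 2 = card V"
proof -
  have "n_odd V G u v + n_even V G u v = card (V - {u, v})"
    unfolding n_odd_def n_even_def even_tri_iff_not_odd
    using assms(1) by (subst card_Un_disjoint[symmetric]) (auto intro: arg_cong[where f = card])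
  moreover have "card {u, v} \<le> card V"
    using assms by (intro card_mono) auto
  ultimately show ?thesis
    using assms by (simp add: card_Diff_subset)
qed

lemma n_odd_eqI:
  assumes "\<And>x. x \<in> V - {u, v} \<Longrightarrow> odd_tri G u v x \<longleftrightarrow> x \<in> T" "T \<subseteq> V - {u, v}"
  shows "n_odd V G u v = card T"
proof -
  have "{x \<in> V - {u, v}. odd_tri G u v x} = T"
    using assms by blast
  then show ?thesis
    unfolding n_odd_def by simp
qed

lemma n_odd_eq_if_odd_edge:
  assumes "finite V" "u \<in> V - {v, w}" "w \<in> V" "v \<in> V" "v \<noteq> w"
    and odd_vw: "\<And>x. x \<in> V - {v, w} \<Longrightarrow> odd_tri G x v w"
  shows "n_odd V G u v = n_odd V G u w"
proof -
  define C where "C = {x \<in> V - {u, v, w}. odd_tri G u v x}"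
  have "odd_tri G u v x \<longleftrightarrow> odd_tri G u w x" if "x \<in> V - {u, v, w}" for x
  proof -
    have "distinct [u, v, w, x]"
      using that assms(2,5) by auto
    then show ?thesis
      using odd_tri_cocycle[of u v w x G] odd_vw[of u] odd_vw[of x] that assms(2)
      by (auto simp: odd_tri_commute)
  qed
  then have "n_odd V G u v = card (insert w C)" "n_odd V G u w = card (insert v C)"
    using odd_vw[of u] assms(2-5) by (auto intro!: n_odd_eqI simp: C_def odd_tri_commute)
  moreover have "finite C" "v \<notin> C" "w \<notin> C"
    using assms(1) by (auto simp: C_def)
  ultimately show ?thesis
    by simp
qed

definition Xpair :: "'a set \<Rightarrow> 'a set set \<Rightarrow> 'a \<Rightarrow> 'a \<Rightarrow> bool" where
  "Xpair V G v w \<longleftrightarrow> v \<in> V \<and> w \<in> V \<and> v \<noteq> w \<and> (\<forall>u \<in> V - {v, w}. \<not> odd_tri G u v w)"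

text \<open>The condition n_odd = n_even + 1 of Y(\<Gamma>), in the form 2 n_odd + 1 = n, imposed at both
  endpoints; this is equivalent (\<open>Ypair_iff\<close>) and makes the predicate symmetric.\<close>
definition Ypair :: "'a set \<Rightarrow> 'a set set \<Rightarrow> 'a \<Rightarrow> 'a \<Rightarrow> bool" where
  "Ypair V G v w \<longleftrightarrow> v \<in> V \<and> w \<in> V \<and> v \<noteq> w \<and>
     (\<forall>u \<in> V - {v, w}. odd_tri G u v w \<and>
        2 * n_odd V G u v + 1 = card V \<and> 2 * n_odd V G u w + 1 = card V)"

lemma Xpair_commute: "Xpair V G w v \<longleftrightarrow> Xpair V G v w"
  unfolding Xpair_def by (auto simp: odd_tri_commute)

lemma Ypair_commute: "Ypair V G w v \<longleftrightarrow> Ypair V G v w"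
  unfolding Ypair_def by (auto simp: odd_tri_commute)

lemma XpairD:
  assumes "Xpair V G v w"
  shows "v \<in> V" "w \<in> V" "v \<noteq> w" "u \<in> V - {v, w} \<Longrightarrow> \<not> odd_tri G u v w"
  using assms unfolding Xpair_def by auto

lemma YpairD:
  assumes "Ypair V G v w"
  shows "v \<in> V" "w \<in> V" "v \<noteq> w" "u \<in> V - {v, w} \<Longrightarrow> odd_tri G u v w"
    and "u \<in> V - {v, w} \<Longrightarrow> 2 * n_odd V G u v + 1 = card V"
  using assms unfolding Ypair_def by auto

lemma Ypair_iff:
  assumes "finite V" "v \<in> V" "w \<in> V" "v \<noteq> w"
  shows "Ypair V G v w \<longleftrightarrow>
    (\<forall>u \<in> V - {v, w}. odd_tri G u v w \<and> n_odd V G u v = n_even V G u v + 1)"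
    (is "_ \<longleftrightarrow> (\<forall>u \<in> V - {v, w}. ?odd u \<and> ?balanced u)")
proof -
  have sum: "n_odd V G u v + n_even V G u v + 2 = card V" if "u \<in> V - {v, w}" for u
    using n_odd_add_n_even[of V u v G] that assms by auto
  show ?thesis
  proof
    assume "Ypair V G v w"
    then show "\<forall>u \<in> V - {v, w}. ?odd u \<and> ?balanced u"
      using sum YpairD(4,5) by fastforce
  next
    assume balanced: "\<forall>u \<in> V - {v, w}. ?odd u \<and> ?balanced u"
    have "2 * n_odd V G u v + 1 = card V" if "u \<in> V - {v, w}" for u
      using balanced sum[OF that] that by auto
    moreover have "n_odd V G u v = n_odd V G u w" if "u \<in> V - {v, w}" for u
      using n_odd_eq_if_odd_edge[of V u v w G] balanced that assms by auto
    ultimately show "Ypair V G v w"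
      unfolding Ypair_def using assms balanced by auto
  qed
qed

lemma Xset_eq: "Xset V G = {{v, w} | v w. Xpair V G v w}"
  unfolding Xset_def Xpair_def even_tri_iff_not_odd by (auto simp: Kedges_iff; blast)

lemma Yset_eq:
  assumes "finite V"
  shows "Yset V G = {{v, w} | v w. Ypair V G v w}"
proof -
  have "{v, w} \<in> Kedges V \<and> Ypair V G v w \<longleftrightarrow> Ypair V G v w" for v w
    using YpairD(1-3) Kedges_iff by metis
  then show ?thesis
    unfolding Yset_def using Ypair_iff[OF assms] by (auto simp: Kedges_iff; blast)
qed

lemma Yset_iff:
  assumes "finite V"
  shows "{v, w} \<in> Yset V G \<longleftrightarrow> Ypair V G v w"
  unfolding Yset_eq[OF assms] by (auto simp: doubleton_eq_iff Ypair_commute)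

context
  fixes V :: "'a set" and \<Sigma> :: "'a set set"
  assumes finite_V: "finite V" and card_V: "card V \<ge> 4"
begin

abbreviation flipped :: "'a set set" where
  "flipped \<equiv> \<Sigma> \<triangle> Yset V \<Sigma>"


lemma Ypair_unique:
  assumes ab: "Ypair V \<Sigma> a b" and ac: "Ypair V \<Sigma> a c"
  shows "b = c"
proof (rule ccontr)
  assume "b \<noteq> c"
  note abc = YpairD(1-3)[OF ab] YpairD(2,3)[OF ac] this
  have "odd_tri \<Sigma> b c x" if x: "x \<in> V - {b, c}" for x
  proof (cases "x = a")
    case True
    then show ?thesis
      using YpairD(4)[OF ac, of b] abc by (simp add: odd_tri_commute)
  next
    case False
    then have "distinct [a, b, c, x]"
      using x abc by auto
    then show ?thesis
      using odd_tri_cocycle[of a b c x \<Sigma>] YpairD(4)[OF ab, of x] YpairD(4)[OF ac, of x]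
        YpairD(4)[OF ac, of b] x abc
      by (auto simp: odd_tri_commute)
  qed
  then have "n_odd V \<Sigma> b c = card (V - {b, c})"
    by (intro n_odd_eqI) auto
  also have "\<dots> = card V - 2"
    using abc finite_V by (simp add: card_Diff_subset)
  finally have "n_odd V \<Sigma> b c = card V - 2" .
  moreover have "2 * n_odd V \<Sigma> c b + 1 = card V"
    using YpairD(5)[of V \<Sigma> b a c] ab abc by (simp add: Ypair_commute)
  ultimately show False
    using card_V by (simp add: n_odd_commute)
qed

lemma odd_tri_flipped:
  assumes "u \<noteq> v" "u \<noteq> w" "v \<noteq> w"
  shows "odd_tri flipped u v w \<longleftrightarrow>
    (odd_tri \<Sigma> u v w \<noteq> (Ypair V \<Sigma> u v \<noteq> (Ypair V \<Sigma> u w \<noteq> Ypair V \<Sigma> v w)))"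
  unfolding odd_tri_iff[OF assms] symdiff_iff Yset_iff[OF finite_V] by argo

lemma Xpair_flipped:
  assumes "Xpair V \<Sigma> v w"
  shows "Xpair V flipped v w"
proof -
  have "\<not> odd_tri flipped u v w" if u: "u \<in> V - {v, w}" for u
  proof -
    have even: "\<not> odd_tri \<Sigma> u v w"
      using XpairD(4)[OF assms u] .
    have "\<not> Ypair V \<Sigma> v w"
      using even YpairD(4)[of V \<Sigma> v w u] u by auto
    moreover have "\<not> Ypair V \<Sigma> u v"
      using even YpairD(4)[of V \<Sigma> u v w] XpairD(2,3)[OF assms] u by (auto simp: odd_tri_commute)
    moreover have "\<not> Ypair V \<Sigma> u w"
      using even YpairD(4)[of V \<Sigma> u w v] XpairD(1,3)[OF assms] u by (auto simp: odd_tri_commute)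
    ultimately show ?thesis
      using odd_tri_flipped[of u v w] even XpairD(3)[OF assms] u by auto
  qed
  then show ?thesis
    using XpairD(1-3)[OF assms] unfolding Xpair_def by blast
qed

lemma Ypair_flipped:
  assumes "Ypair V \<Sigma> v w"
  shows "Xpair V flipped v w"
proof -
  have "\<not> odd_tri flipped u v w" if u: "u \<in> V - {v, w}" for u
  proof -
    have "\<not> Ypair V \<Sigma> u v"
      using Ypair_unique[of v u w] assms u by (auto simp: Ypair_commute)
    moreover have "\<not> Ypair V \<Sigma> u w"
      using Ypair_unique[of w u v] assms u by (auto simp: Ypair_commute)
    ultimately show ?thesis
      using odd_tri_flipped[of u v w] YpairD(3)[OF assms] YpairD(4)[OF assms u] assms u by auto
  qed
  then show ?thesis
    using YpairD(1-3)[OF assms] unfolding Xpair_def by blast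
qed

lemma odd_tri_if_Xpair_flipped:
  assumes "Xpair V flipped a b" "\<not> Ypair V \<Sigma> a b" "y \<in> V - {a, b}"
  shows "odd_tri \<Sigma> a b y \<longleftrightarrow> Ypair V \<Sigma> a y \<noteq> Ypair V \<Sigma> b y"
proof -
  have "\<not> odd_tri flipped a b y"
    using XpairD(4)[OF assms(1,3)] by (simp add: odd_tri_commute)
  then show ?thesis
    using odd_tri_flipped[of a b y] XpairD(3)[OF assms(1)] assms(2,3) by auto
qed

text \<open>If b had no partner, the only odd triangle of \<Sigma> on ab would be the one through a',
  whereas the Y-edge aa' requires (n - 1) / 2 odd triangles on ab.\<close>
lemma Xpair_flipped_partner:
  assumes ab: "Xpair V flipped a b" "\<not> Ypair V \<Sigma> a b" and a': "Ypair V \<Sigma> a a'"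
  shows "\<exists>b'. Ypair V \<Sigma> b b'"
proof (rule ccontr)
  assume unmatched: "\<nexists>b'. Ypair V \<Sigma> b b'"
  have a'_ne: "a' \<noteq> a" "a' \<noteq> b"
    using YpairD(3)[OF a'] ab(2) a' by auto
  have "odd_tri \<Sigma> a b y \<longleftrightarrow> y \<in> {a'}" if "y \<in> V - {a, b}" for y
    using odd_tri_if_Xpair_flipped[OF ab that] Ypair_unique[OF a', of y] a' unmatched by auto
  then have "n_odd V \<Sigma> a b = 1"
    using n_odd_eqI[of V a b \<Sigma> "{a'}"] YpairD(2)[OF a'] a'_ne by auto
  moreover have "2 * n_odd V \<Sigma> b a + 1 = card V"
    using YpairD(5)[OF a', of b] XpairD(2,3)[OF ab(1)] a'_ne by auto
  ultimately show False
    using card_V by (simp add: n_odd_commute)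
qed

text \<open>Now the odd triangles on ab are those through a' and through b', which forces n = 5;
  then the cocycle identity leaves a fifth vertex c with at most one odd triangle on ca.\<close>
lemma Xpair_flipped_two_partners:
  assumes ab: "Xpair V flipped a b" "\<not> Ypair V \<Sigma> a b"
    and a': "Ypair V \<Sigma> a a'" and b': "Ypair V \<Sigma> b b'"
  shows False
proof -
  have "a' \<noteq> b'"
    using Ypair_unique[of a' a b] a' b' XpairD(3)[OF ab(1)] by (auto simp: Ypair_commute)
  then have ne: "a \<noteq> b" "a' \<noteq> a" "a' \<noteq> b" "b' \<noteq> b" "b' \<noteq> a" "a' \<noteq> b'"
    using XpairD(3)[OF ab(1)] YpairD(3)[OF a'] YpairD(3)[OF b'] ab(2) a' b'
    by (auto simp: Ypair_commute)
  have in_V: "a \<in> V" "a' \<in> V" "b \<in> V" "b' \<in> V"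
    using YpairD(1,2)[OF a'] YpairD(1,2)[OF b'] by auto
  have odd_ab: "odd_tri \<Sigma> a b y \<longleftrightarrow> y \<in> {a', b'}" if "y \<in> V - {a, b}" for y
    using odd_tri_if_Xpair_flipped[OF ab that] Ypair_unique[OF a', of y]
      Ypair_unique[OF b', of y] a' b' ne(6)
    by auto
  then have "n_odd V \<Sigma> a b = 2"
    using n_odd_eqI[of V a b \<Sigma> "{a', b'}"] in_V ne by auto
  moreover have "2 * n_odd V \<Sigma> b a + 1 = card V"
    using YpairD(5)[OF a', of b] in_V ne by auto
  ultimately have card_5: "card V = 5"
    by (simp add: n_odd_commute)
  have "card {a, a', b, b'} \<le> 4"
    by (simp add: card_insert_if)
  then have "\<not> V \<subseteq> {a, a', b, b'}"
    using card_mono[of "{a, a', b, b'}" V] card_5 by auto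
  then obtain c where c: "c \<in> V - {a, a', b, b'}"
    by blast
  have "distinct [a, b, b', c]"
    using c ne by auto
  moreover have "\<not> odd_tri \<Sigma> a b c" "odd_tri \<Sigma> a b b'" "odd_tri \<Sigma> b b' c"
    using odd_ab[of c] odd_ab[of b'] c in_V ne YpairD(4)[OF b', of c] by (auto simp: odd_tri_commute)
  ultimately have "\<not> odd_tri \<Sigma> a b' c"
    using odd_tri_cocycle[of a b b' c \<Sigma>] by auto
  with \<open>\<not> odd_tri \<Sigma> a b c\<close> have "{x \<in> V - {c, a}. odd_tri \<Sigma> c a x} \<subseteq> V - {c, a, b, b'}"
    by (auto simp: odd_tri_commute)
  then have "n_odd V \<Sigma> c a \<le> card (V - {c, a, b, b'})"
    unfolding n_odd_def using finite_V by (intro card_mono) auto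
  also have "\<dots> = 1"
    using \<open>distinct [a, b, b', c]\<close> c in_V card_5 finite_V by (simp add: card_Diff_subset)
  finally have "n_odd V \<Sigma> c a \<le> 1" .
  moreover have "2 * n_odd V \<Sigma> c a + 1 = card V"
    using YpairD(5)[OF a', of c] c by auto
  ultimately show False
    using card_5 by simp
qed

lemma Xpair_flipped_unmatched:
  assumes "Xpair V flipped a b" "\<not> Ypair V \<Sigma> a b"
  shows "\<not> Ypair V \<Sigma> a c"
  using Xpair_flipped_partner[OF assms] Xpair_flipped_two_partners[OF assms] by blast

lemma Xpair_flipped_iff: "Xpair V flipped a b \<longleftrightarrow> Xpair V \<Sigma> a b \<or> Ypair V \<Sigma> a b"
proof
  assume X: "Xpair V flipped a b"
  show "Xpair V \<Sigma> a b \<or> Ypair V \<Sigma> a b"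
  proof (rule disjCI)
    assume not_Y: "\<not> Ypair V \<Sigma> a b"
    have "\<not> Ypair V \<Sigma> a y" "\<not> Ypair V \<Sigma> b y" for y
      using Xpair_flipped_unmatched[OF X not_Y] Xpair_flipped_unmatched[of b a y] X not_Y
      by (metis Xpair_commute Ypair_commute)+
    then have "\<not> odd_tri \<Sigma> u a b" if "u \<in> V - {a, b}" for u
      using odd_tri_if_Xpair_flipped[OF X not_Y that] by (simp add: odd_tri_commute)
    then show "Xpair V \<Sigma> a b"
      using XpairD(1-3)[OF X] unfolding Xpair_def by blast
  qed
next
  assume "Xpair V \<Sigma> a b \<or> Ypair V \<Sigma> a b"
  then show "Xpair V flipped a b"
    using Xpair_flipped Ypair_flipped by blast
qed

text \<open>If v' = w, then vw would be an X-edge of the flipped signing; otherwise the flip makes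
  the triangle v v' w even.\<close>
lemma Ypair_flipped_unmatched:
  assumes vw: "Ypair V flipped v w"
  shows "\<not> Ypair V \<Sigma> v v'"
proof
  assume v': "Ypair V \<Sigma> v v'"
  show False
  proof (cases "v' = w")
    case True
    have "card {v, w} \<le> 2"
      by (simp add: card_insert_if)
    then have "\<not> V \<subseteq> {v, w}"
      using card_mono[of "{v, w}" V] card_V by auto
    then obtain u where "u \<in> V - {v, w}"
      by blast
    then show False
      using XpairD(4)[OF Ypair_flipped[OF v'[unfolded True]]] YpairD(4)[OF vw] by blast
  next
    case False
    have ne: "v \<noteq> w" "v' \<noteq> v" "v' \<in> V"
      using YpairD(1-3)[OF v'] YpairD(3)[OF vw] by auto
    have "odd_tri flipped v' v w"
      using YpairD(4)[OF vw, of v'] ne False by auto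
    moreover have "odd_tri \<Sigma> v' v w"
      using YpairD(4)[OF v', of w] YpairD(2)[OF vw] ne False by (auto simp: odd_tri_commute)
    moreover have "Ypair V \<Sigma> v' v" "\<not> Ypair V \<Sigma> v' w" "\<not> Ypair V \<Sigma> v w"
      using v' Ypair_unique[of v' v w] Ypair_unique[OF v', of w] ne False
      by (auto simp: Ypair_commute)
    ultimately show False
      using odd_tri_flipped[of v' v w] ne False by auto
  qed
qed


lemma not_Ypair_flipped:
  assumes "Yset V \<Sigma> \<noteq> {}"
  shows "\<not> Ypair V flipped v w"
proof
  assume vw: "Ypair V flipped v w"
  have free: "\<not> Ypair V \<Sigma> v c" "\<not> Ypair V \<Sigma> w c" for c
    using Ypair_flipped_unmatched[OF vw] Ypair_flipped_unmatched[of w v] vw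
    by (auto simp: Ypair_commute)
  obtain a b where ab: "Ypair V \<Sigma> a b"
    using assms Yset_eq[OF finite_V] by auto
  have ne: "a \<noteq> v" "b \<noteq> v" "a \<noteq> w" "b \<noteq> w"
    using free ab by (auto simp: Ypair_commute)
  have a_in: "a \<in> V - {v, w}" and b_in: "b \<in> V - {a, v}"
    using YpairD(1-3)[OF ab] ne by auto
  have flip: "odd_tri flipped a v x \<longleftrightarrow> odd_tri \<Sigma> a v x \<noteq> (x = b)" if "x \<in> V - {a, v}" for x
    using odd_tri_flipped[of a v x] Ypair_unique[OF ab, of x] ab free[of a] free[of x] that ne
    by (auto simp: Ypair_commute)
  moreover have "odd_tri \<Sigma> a v b"
    using YpairD(4)[OF ab, of v] ne YpairD(1)[OF vw] by (simp add: odd_tri_commute)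
  ultimately have "n_odd V \<Sigma> a v = card (insert b {x \<in> V - {a, v}. odd_tri flipped a v x})"
    using b_in by (intro n_odd_eqI) auto
  also have "\<dots> = n_odd V flipped a v + 1"
    unfolding n_odd_def using finite_V flip[OF b_in] \<open>odd_tri \<Sigma> a v b\<close> by simp
  finally have "n_odd V \<Sigma> a v = n_odd V flipped a v + 1" .
  moreover have "2 * n_odd V flipped a v + 1 = card V"
    using YpairD(5)[OF vw a_in] .
  moreover have "2 * n_odd V \<Sigma> v a + 1 = card V"
    using YpairD(5)[OF ab, of v] ne YpairD(1)[OF vw] by simp
  ultimately show False
    by (simp add: n_odd_commute)
qed

end

theorem lemma3p5:
  fixes V :: "'a set" and \<Sigma> :: "'a set set"
  assumes "finite V" and "card V \<ge> 4"
    and "\<Sigma> \<subseteq> Kedges V"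
    and "Yset V \<Sigma> \<noteq> {}"
  shows "Xset V \<Sigma> \<union> Yset V \<Sigma> = Xset V (\<Sigma> \<triangle> Yset V \<Sigma>) \<and>
         Yset V (\<Sigma> \<triangle> Yset V \<Sigma>) = {}"
proof
  have "Xset V \<Sigma> \<union> Yset V \<Sigma> = {{v, w} | v w. Xpair V \<Sigma> v w \<or> Ypair V \<Sigma> v w}"
    unfolding Xset_eq Yset_eq[OF assms(1)] by blast
  also have "\<dots> = Xset V (\<Sigma> \<triangle> Yset V \<Sigma>)"
    by (simp only: Xset_eq Xpair_flipped_iff[OF assms(1,2)])
  finally show "Xset V \<Sigma> \<union> Yset V \<Sigma> = Xset V (\<Sigma> \<triangle> Yset V \<Sigma>)" .
  show "Yset V (\<Sigma> \<triangle> Yset V \<Sigma>) = {}"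
    unfolding Yset_eq[OF assms(1), of "\<Sigma> \<triangle> Yset V \<Sigma>"]
    using not_Ypair_flipped[OF assms(1,2,4)] by blast
qed

end
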